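(* In the SBORS setting described in the context, for any round $t\le T$, any item $i\in\{1,\dots,N\}$ and any $r>1$, $$P\big(|u_i'(t)-\hat u_i(t)|>4\hat\sigma_{u_i}(t)\sqrt{\log (rR)}\big)\le\frac{1}{r^8R^7},\qquad P\big(|q'(t)-\hat q(t)|>4\hat\sigma_q(t)\sqrt{\log (rR)}\big)\le\frac{1}{r^8R^7}.$$
   Context: SBORS, with parameters $\alpha>0,\beta\ge2$ and integer $R\ge1$, maintains for each item $i$ of $N$ items a count $T_i(t)$ of views and estimate $\hat u_i(t)\in[0,1]$, and a count $N_q(t)$ and estimate $\hat q(t)\in[0,1]$, and sets $\hat\sigma_{u_i}(t)=\sqrt{\alpha\hat u_i(t)(1-\hat u_i(t))/(T_i(t)+1)}+\sqrt{\beta/T_i(t)}$, $\hat\sigma_q(t)=\sqrt{\alpha\hat q(t)(1-\hat q(t))/(N_q(t)+1)}+\sqrt{\beta/N_q(t)}$. In round $t$ it draws $\theta^{(1)},\dots,\theta^{(R)}$ i.i.d. $N(0,1)$, independently of the past, and sets $u_i'(t)=\max_{j\le R}\big(\hat u_i(t)+\theta^{(j)}\hat\sigma_{u_i}(t)\big)$ and $q'(t)=\max_{j\le R}\big(\hat q(t)+\theta^{(j)}\hat\sigma_q(t)\big)$. *)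

theory Defs
  imports "HOL-Probability.Probability"
begin

definition std_normal_measure :: "real measure" where
  "std_normal_measure = density lborel (\<lambda>x. ennreal (std_normal_density x))"

text \<open>Joint law of the R i.i.d. N(0,1) samples theta^(1..R) drawn in one round
  (indexed by j < R).\<close>
definition theta_space :: "nat \<Rightarrow> (nat \<Rightarrow> real) measure" where
  "theta_space R = PiM {..<R} (\<lambda>_. std_normal_measure)"

definition sbors_sigma :: "real \<Rightarrow> real \<Rightarrow> real \<Rightarrow> nat \<Rightarrow> real" where
  "sbors_sigma \<alpha> \<beta> est n =
     sqrt (\<alpha> * est * (1 - est) / (real n + 1)) + sqrt (\<beta> / real n)"

definition sbors_sample :: "nat \<Rightarrow> real \<Rightarrow> real \<Rightarrow> (nat \<Rightarrow> real) \<Rightarrow> real" where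
  "sbors_sample R est sig \<theta> = Max ((\<lambda>j. est + \<theta> j * sig) ` {..<R})"

end

theory Submission
  imports Defs
begin

text \<open>
  The optimistic sample \<open>max\<^sub>j (est + \<theta> j \<sigma>)\<close> can only be more than \<open>c \<sigma>\<close> away from
  \<open>est\<close> if some \<open>|\<theta> j| > c\<close>. Comparing the Gaussian density with its shift by \<open>c\<close> gives
  \<open>P(|\<theta> j| > c) \<le> exp (- c\<^sup>2 / 2)\<close>, so by the union bound over the \<open>R\<close> samples the
  deviation has probability at most \<open>R exp (- c\<^sup>2 / 2)\<close>; for \<open>c = 4 sqrt (ln (r R))\<close>
  this is \<open>R (r R)\<^sup>-\<^sup>8 = 1 / (r\<^sup>8 R\<^sup>7)\<close>.
\<close>

lemma prob_space_std_normal_measure: "prob_space std_normal_measure"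
  unfolding std_normal_measure_def by (rule prob_space_normal_density) simp

lemma sets_std_normal_measure [measurable_cong]: "sets std_normal_measure = sets borel"
  by (simp add: std_normal_measure_def)

lemma emeasure_std_normal_measure:
  assumes "A \<in> sets borel"
  shows "emeasure std_normal_measure A
           = (\<integral>\<^sup>+x. ennreal (std_normal_density x) * indicator A x \<partial>lborel)"
  unfolding std_normal_measure_def using assms by (simp add: emeasure_density)

lemma std_normal_density_minus [simp]: "std_normal_density (- x) = std_normal_density x"
  by (simp add: std_normal_density_def)

lemma std_normal_density_le_shift:
  assumes "0 \<le> c" "c \<le> x"
  shows "std_normal_density x \<le> exp (- c\<^sup>2 / 2) * std_normal_density (x - c)"
proof -
  have "0 \<le> c * (x - c)" using assms by simp
  then have "- x\<^sup>2 / 2 \<le> - c\<^sup>2 / 2 + - (x - c)\<^sup>2 / 2"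
    by (simp add: power2_eq_square algebra_simps)
  then have "exp (- x\<^sup>2 / 2) \<le> exp (- c\<^sup>2 / 2) * exp (- (x - c)\<^sup>2 / 2)"
    by (simp add: exp_add [symmetric])
  then show ?thesis
    unfolding std_normal_density_def by (simp add: mult.left_commute divide_right_mono)
qed

lemma measure_std_normal_lessThan_uminus:
  "measure std_normal_measure {..< - c} = measure std_normal_measure {c <..}"
proof -
  have "emeasure std_normal_measure {..< - c} = emeasure std_normal_measure {c <..}"
    by (simp add: emeasure_std_normal_measure,
        subst nn_integral_real_affine [where c = "-1" and t = 0])
       (auto simp: indicator_def)
  then show ?thesis by (simp add: measure_def)
qed

lemma measure_std_normal_greaterThan_half: "measure std_normal_measure {0 <..} \<le> 1 / 2"
proof -
  interpret prob_space std_normal_measure by (rule prob_space_std_normal_measure)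
  have "measure std_normal_measure {0 <..} + measure std_normal_measure {..< 0}
          = measure std_normal_measure ({0 <..} \<union> {..< 0})"
    by (rule finite_measure_Union [symmetric]) auto
  also have "\<dots> \<le> 1" by simp
  finally show ?thesis using measure_std_normal_lessThan_uminus [of 0] by simp
qed

lemma measure_std_normal_greaterThan_le:
  assumes "0 \<le> c"
  shows "measure std_normal_measure {c <..}
           \<le> exp (- c\<^sup>2 / 2) * measure std_normal_measure {0 <..}"
proof -
  interpret prob_space std_normal_measure by (rule prob_space_std_normal_measure)
  let ?\<phi> = "\<lambda>x. ennreal (std_normal_density x)"
  have "emeasure std_normal_measure {c <..} = (\<integral>\<^sup>+x. ?\<phi> x * indicator {c <..} x \<partial>lborel)"
    by (simp add: emeasure_std_normal_measure)
  also have "\<dots> \<le> (\<integral>\<^sup>+x. ennreal (exp (- c\<^sup>2 / 2)) * (?\<phi> (x - c) * indicator {c <..} x) \<partial>lborel)"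
    using std_normal_density_le_shift [OF assms]
    by (intro nn_integral_mono)
       (auto simp: indicator_def ennreal_mult [symmetric] intro!: ennreal_leI)
  also have "\<dots> = ennreal (exp (- c\<^sup>2 / 2)) * (\<integral>\<^sup>+x. ?\<phi> x * indicator {0 <..} x \<partial>lborel)"
    by (simp add: nn_integral_cmult, subst nn_integral_real_affine [where c = 1 and t = c])
       (auto simp: indicator_def)
  also have "\<dots> = ennreal (exp (- c\<^sup>2 / 2) * measure std_normal_measure {0 <..})"
    by (simp add: emeasure_std_normal_measure [symmetric] emeasure_eq_measure ennreal_mult)
  finally show ?thesis by (simp add: emeasure_eq_measure)
qed

lemma measure_std_normal_abs_greater_le:
  assumes "0 \<le> c"
  shows "measure std_normal_measure {x. c < \<bar>x\<bar>} \<le> exp (- c\<^sup>2 / 2)"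
proof -
  interpret prob_space std_normal_measure by (rule prob_space_std_normal_measure)
  have "{x. c < \<bar>x\<bar>} = {..< - c} \<union> {c <..}" by auto
  then have "measure std_normal_measure {x. c < \<bar>x\<bar>}
               \<le> measure std_normal_measure {..< - c} + measure std_normal_measure {c <..}"
    by (simp add: measure_subadditive)
  also have "\<dots> \<le> 2 * (exp (- c\<^sup>2 / 2) * measure std_normal_measure {0 <..})"
    using measure_std_normal_greaterThan_le [OF assms]
    by (simp add: measure_std_normal_lessThan_uminus)
  also have "\<dots> \<le> exp (- c\<^sup>2 / 2)"
    using measure_std_normal_greaterThan_half by simp
  finally show ?thesis .
qed

lemma prob_space_theta_space: "prob_space (theta_space R)"
  unfolding theta_space_def by (intro prob_space_PiM prob_space_std_normal_measure)

lemma measure_theta_space_component: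
  assumes "j < R" and A: "A \<in> sets borel"
  shows "measure (theta_space R) {\<theta> \<in> space (theta_space R). \<theta> j \<in> A}
           = measure std_normal_measure A"
proof -
  have component: "(\<lambda>\<theta>. \<theta> j) \<in> measurable (theta_space R) std_normal_measure"
    unfolding theta_space_def using assms by (intro measurable_component_singleton) auto
  have "measure (theta_space R) {\<theta> \<in> space (theta_space R). \<theta> j \<in> A}
          = measure (distr (theta_space R) std_normal_measure (\<lambda>\<theta>. \<theta> j)) A"
    using A by (subst measure_distr [OF component]) (auto simp: vimage_def Int_def conj_commute)
  also have "distr (theta_space R) std_normal_measure (\<lambda>\<theta>. \<theta> j) = std_normal_measure"
    unfolding theta_space_def using assms
    by (intro distr_PiM_component prob_space_std_normal_measure) auto
  finally show ?thesis .
qed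

lemma sbors_sigma_nonneg:
  assumes "0 \<le> \<alpha>" "0 \<le> \<beta>" "0 \<le> est" "est \<le> 1"
  shows "0 \<le> sbors_sigma \<alpha> \<beta> est n"
  unfolding sbors_sigma_def using assms by (intro add_nonneg_nonneg) auto

lemma sbors_sample_deviation_imp_large_theta:
  assumes R: "R \<ge> 1" and sig: "0 \<le> sig"
    and dev: "c * sig < \<bar>sbors_sample R est sig \<theta> - est\<bar>"
  shows "\<exists>j<R. c < \<bar>\<theta> j\<bar>"
proof -
  let ?S = "(\<lambda>j. est + \<theta> j * sig) ` {..<R}"
  have "?S \<noteq> {}" using R by (auto simp: lessThan_empty_iff)
  then obtain j where j: "j < R" "Max ?S = est + \<theta> j * sig"
    using Max_in [of ?S] by fastforce
  have le_Max: "est + \<theta> 0 * sig \<le> Max ?S" using R by (intro Max_ge) auto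
  show ?thesis
  proof (cases "c * sig < Max ?S - est")
    case True
    then have "c * sig < \<theta> j * sig" using j by simp
    then have "c < \<theta> j" using sig by (rule mult_right_less_imp_less)
    then show ?thesis using j by auto
  next
    case False
    then have "c * sig < (- \<theta> 0) * sig"
      using dev le_Max by (simp add: sbors_sample_def)
    then have "c < - \<theta> 0" using sig by (rule mult_right_less_imp_less)
    then show ?thesis using R by (intro exI [of _ 0]) auto
  qed
qed

lemma sbors_sample_deviation_prob_le:
  assumes R: "R \<ge> 1" and sig: "0 \<le> sig" and c: "0 \<le> c"
  shows "measure (theta_space R)
           {\<theta> \<in> space (theta_space R). c * sig < \<bar>sbors_sample R est sig \<theta> - est\<bar>}
         \<le> real R * exp (- c\<^sup>2 / 2)"
proof -
  interpret prob_space "theta_space R" by (rule prob_space_theta_space)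
  let ?large = "\<lambda>j. {\<theta> \<in> space (theta_space R). \<theta> j \<in> {x. c < \<bar>x\<bar>}}"
  have large_sets: "?large j \<in> sets (theta_space R)" if "j < R" for j
  proof -
    have "j \<in> {..<R}" using that by simp
    then show ?thesis unfolding theta_space_def by measurable
  qed
  have "measure (theta_space R)
          {\<theta> \<in> space (theta_space R). c * sig < \<bar>sbors_sample R est sig \<theta> - est\<bar>}
          \<le> measure (theta_space R) (\<Union>j<R. ?large j)"
    using sbors_sample_deviation_imp_large_theta [OF R sig, of c est] large_sets
    by (intro finite_measure_mono) (fastforce, auto)
  also have "\<dots> \<le> (\<Sum>j<R. measure (theta_space R) (?large j))"
    using large_sets by (intro measure_UNION_le) auto
  also have "\<dots> = (\<Sum>j<R. measure std_normal_measure {x. c < \<bar>x\<bar>})"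
    by (intro sum.cong refl measure_theta_space_component) auto
  also have "\<dots> \<le> (\<Sum>j<R. exp (- c\<^sup>2 / 2))"
    using measure_std_normal_abs_greater_le [OF c] by (intro sum_mono)
  finally show ?thesis by simp
qed

lemma mult_exp_neg_8_ln:
  fixes R r :: real
  assumes "R > 0" "r > 0"
  shows "R * exp (- 8 * ln (r * R)) = 1 / (r ^ 8 * R ^ 7)"
proof -
  have "exp (8 * ln (r * R)) = (r * R) ^ 8"
    using assms by (metis exp_ln exp_of_nat_mult of_nat_numeral mult_pos_pos)
  then have "exp (- 8 * ln (r * R)) = 1 / (r * R) ^ 8"
    by (simp add: exp_minus divide_inverse)
  then show ?thesis using assms by (simp add: power_mult_distrib field_simps eval_nat_numeral)
qed

theorem lemma3:
  fixes N T t i R :: nat and \<alpha> \<beta> r :: real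
    and u_hat :: "nat \<Rightarrow> nat \<Rightarrow> real" and T_cnt :: "nat \<Rightarrow> nat \<Rightarrow> nat"
    and q_hat :: "nat \<Rightarrow> real" and N_q :: "nat \<Rightarrow> nat"
  assumes "\<alpha> > 0" and "\<beta> \<ge> 2" and "R \<ge> 1" and "r > 1"
    and "t \<le> T" and "i \<in> {1..N}"
    and "\<And>k s. 0 \<le> u_hat k s \<and> u_hat k s \<le> 1"
    and "\<And>s. 0 \<le> q_hat s \<and> q_hat s \<le> 1"
  shows "measure (theta_space R)
           {\<theta> \<in> space (theta_space R).
              \<bar>sbors_sample R (u_hat i t) (sbors_sigma \<alpha> \<beta> (u_hat i t) (T_cnt i t)) \<theta> - u_hat i t\<bar>
                > 4 * sbors_sigma \<alpha> \<beta> (u_hat i t) (T_cnt i t) * sqrt (ln (r * real R))}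
           \<le> 1 / (r ^ 8 * real R ^ 7)
       \<and> measure (theta_space R)
           {\<theta> \<in> space (theta_space R).
              \<bar>sbors_sample R (q_hat t) (sbors_sigma \<alpha> \<beta> (q_hat t) (N_q t)) \<theta> - q_hat t\<bar>
                > 4 * sbors_sigma \<alpha> \<beta> (q_hat t) (N_q t) * sqrt (ln (r * real R))}
           \<le> 1 / (r ^ 8 * real R ^ 7)"
proof -
  define L where "L = ln (r * real R)"
  have "1 * 1 \<le> r * real R" using assms(3,4) by (intro mult_mono) auto
  then have L: "0 \<le> L" by (simp add: L_def)
  have bound: "measure (theta_space R)
      {\<theta> \<in> space (theta_space R). 4 * sbors_sigma \<alpha> \<beta> est n * sqrt L
         < \<bar>sbors_sample R est (sbors_sigma \<alpha> \<beta> est n) \<theta> - est\<bar>}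
      \<le> 1 / (r ^ 8 * real R ^ 7)" if "0 \<le> est" "est \<le> 1" for est n
  proof -
    have sig: "0 \<le> sbors_sigma \<alpha> \<beta> est n"
      using assms(1,2) that by (intro sbors_sigma_nonneg) auto
    have "(4 * sqrt L)\<^sup>2 / 2 = 8 * L" using L by (simp add: power_mult_distrib)
    then show ?thesis
      using sbors_sample_deviation_prob_le [OF assms(3) sig, of "4 * sqrt L" est] L
        mult_exp_neg_8_ln [of "real R" r] assms(3,4)
      by (simp add: L_def mult_ac)
  qed
  show ?thesis using bound assms(7,8) by (simp add: L_def)
qed

end
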